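(* Let $V$ be a finite set, $\mathcal{F}\subseteq 2^V$ a minimal hereditary family with $\delta(\mathcal{F})\ge 12$, and let $x\in V$ be mini-weight. Then: (1) $|\mathcal{Q}(x)|=2$; (2) writing $\mathcal{Q}(x)=\{Q_1,Q_2\}$, we have $|Q_1\cap Q_2|=3$ and $\mathcal{F}(x)=\{F\setminus\{x\}: x\in F\subseteq Q_i \text{ for some } i\in\{1,2\}\}$; (3) $u(x)=5.3-\frac{2}{15}$.
   Context: Let $V$ be a finite set. A family $\mathcal{F}\subseteq 2^V$ is hereditary if $F'\subseteq F\in\mathcal{F}$ implies $F'\in\mathcal{F}$. For $x\in V$: the link is $\mathcal{F}(x)=\{F\setminus\{x\}: x\in F\in\mathcal{F}\}$, $d_{\mathcal{F}}(x)=|\mathcal{F}(x)|$, $\delta(\mathcal{F})=\min_{x\in V}d_{\mathcal{F}}(x)$. For $A\subseteq V$, $d_{\mathcal{F}}(A)=|\{F\in\mathcal{F}: A\subseteq F\}|$. A set $F\in\mathcal{F}$ is maximal if no other member strictly contains it; a hereditary $\mathcal{F}$ with $\delta(\mathcal{F})\ge 12$ is minimal if $\delta(\mathcal{F}\setminus\{F\})\le 11$ for every maximal $F\in\mathcal{F}$. $f_i(x)$ denotes the number of $i$-element sets in $\mathcal{F}(x)$. A vertex $x$ is mini-weight if $f_1(x)=4$, $f_2(x)=5$, $f_3(x)=2$. $\mathcal{Q}=\{Q\in\mathcal{F}:|Q|=4\}$ and $\mathcal{Q}(x)=\{Q\in\mathcal{Q}: x\in Q\}$. Weights: for $x\in F\in\mathcal{F}$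 define $\omega(x,F)$ as follows. If $|F|\ne 3$, $\omega(x,F)=1/|F|$. If $|F|=3$: if $F$ is contained in some 4-element member of $\mathcal{F}$, every element of $F$ gets $\omega=1/3$; otherwise order the three 2-subsets of $F$ as $e_1,e_2,e_3$ with $d_{\mathcal{F}}(e_1)\le d_{\mathcal{F}}(e_2)\le d_{\mathcal{F}}(e_3)$; if $d_{\mathcal{F}}(e_2)\le 4<d_{\mathcal{F}}(e_3)$, the two elements of $e_3$ get $\omega=7/20$ and the element of $F\setminus e_3$ gets $6/20$; else if $d_{\mathcal{F}}(e_1)\le 4<d_{\mathcal{F}}(e_2)$, the two elements of $e_1$ get $7/20$ and the element of $F\setminus e_1$ gets $6/20$; otherwise every element of $F$ gets $1/3$. The weight of $x$ is $u(x)=\sum_{x\in F\in\mathcal{F}}\omega(x,F)$. *)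

theory Defs
  imports Complex_Main
begin

definition hereditary :: "'a set set \<Rightarrow> bool" where
  "hereditary \<F> \<longleftrightarrow> (\<forall>F F'. F \<in> \<F> \<and> F' \<subseteq> F \<longrightarrow> F' \<in> \<F>)"

definition link :: "'a set set \<Rightarrow> 'a \<Rightarrow> 'a set set" where
  "link \<F> x = {F - {x} | F. x \<in> F \<and> F \<in> \<F>}"

definition deg :: "'a set set \<Rightarrow> 'a \<Rightarrow> nat" where
  "deg \<F> x = card (link \<F> x)"

definition mindeg :: "'a set \<Rightarrow> 'a set set \<Rightarrow> nat" where
  "mindeg V \<F> = Min ((\<lambda>x. deg \<F> x) ` V)"

definition setdeg :: "'a set set \<Rightarrow> 'a set \<Rightarrow> nat" where
  "setdeg \<F> A = card {F \<in> \<F>. A \<subseteq> F}"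

definition maximal_in :: "'a set set \<Rightarrow> 'a set \<Rightarrow> bool" where
  "maximal_in \<F> F \<longleftrightarrow> F \<in> \<F> \<and> (\<forall>G \<in> \<F>. F \<subseteq> G \<longrightarrow> G = F)"

definition minimal_family :: "'a set \<Rightarrow> 'a set set \<Rightarrow> bool" where
  "minimal_family V \<F> \<longleftrightarrow> hereditary \<F> \<and> mindeg V \<F> \<ge> 12 \<and>
     (\<forall>F. maximal_in \<F> F \<longrightarrow> mindeg V (\<F> - {F}) \<le> 11)"

definition fcount :: "'a set set \<Rightarrow> nat \<Rightarrow> 'a \<Rightarrow> nat" where
  "fcount \<F> i x = card {S \<in> link \<F> x. card S = i}"

definition mini_weight :: "'a set set \<Rightarrow> 'a \<Rightarrow> bool" where
  "mini_weight \<F> x \<longleftrightarrow> fcount \<F> 1 x = 4 \<and> fcount \<F> 2 x = 5 \<and> fcount \<F> 3 x = 2"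

definition Qx :: "'a set set \<Rightarrow> 'a \<Rightarrow> 'a set set" where
  "Qx \<F> x = {Q \<in> \<F>. card Q = 4 \<and> x \<in> Q}"

definition pairs :: "'a set \<Rightarrow> 'a set set" where
  "pairs F = {e. e \<subseteq> F \<and> card e = 2}"

definition high_pairs :: "'a set set \<Rightarrow> 'a set \<Rightarrow> 'a set set" where
  "high_pairs \<F> F = {e \<in> pairs F. setdeg \<F> e > 4}"

(* With e1,e2,e3 sorted by d: "d(e2) <= 4 < d(e3)" iff exactly one pair is high
   (and then e3 is that pair); "d(e1) <= 4 < d(e2)" iff exactly two pairs are high
   (and then e1 is the unique low pair). *)
definition omega :: "'a set set \<Rightarrow> 'a \<Rightarrow> 'a set \<Rightarrow> real" where
  "omega \<F> x F =
    (if card F \<noteq> 3 then 1 / real (card F)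
     else if (\<exists>G \<in> \<F>. card G = 4 \<and> F \<subseteq> G) then 1/3
     else if card (high_pairs \<F> F) = 1 then
       (if x \<in> \<Union>(high_pairs \<F> F) then 7/20 else 6/20)
     else if card (high_pairs \<F> F) = 2 then
       (if x \<in> \<Union>(pairs F - high_pairs \<F> F) then 7/20 else 6/20)
     else 1/3)"

definition weight :: "'a set set \<Rightarrow> 'a \<Rightarrow> real" where
  "weight \<F> x = (\<Sum>F \<in> {F \<in> \<F>. x \<in> F}. omega \<F> x F)"

end

theory Submission
  imports Defs
begin

text \<open>
  Only heredity and the three face counts at \<open>x\<close> matter.  The link \<open>L\<close> of \<open>x\<close> is a
  hereditary family on its four singletons \<open>U\<close>; since \<open>U\<close> has six pairs but \<open>L\<close> only
  five, exactly one pair \<open>{c, d}\<close> is missing, so every member of \<open>L\<close> lies in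
  \<open>U - {c}\<close> or in \<open>U - {d}\<close>, and the two triangles of \<open>L\<close> must be these two sets.
  Hence the faces through \<open>x\<close> are the subsets of two 4-sets meeting in three
  points.  Every 3-set through \<open>x\<close> then lies in a 4-set, so all weights are
  \<open>1/|F|\<close> and \<open>u(x) = 1 + 4/2 + 5/3 + 2/4 = 31/6\<close>.
\<close>

lemma hereditaryD: "hereditary \<F> \<Longrightarrow> F \<in> \<F> \<Longrightarrow> G \<subseteq> F \<Longrightarrow> G \<in> \<F>"
  unfolding hereditary_def by blast

lemma mem_link_iff: "S \<in> link \<F> x \<longleftrightarrow> x \<notin> S \<and> insert x S \<in> \<F>"
  unfolding link_def by (auto simp: insert_absorb)

lemma hereditary_link:
  assumes "hereditary \<F>"
  shows "hereditary (link \<F> x)"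
  unfolding hereditary_def mem_link_iff
  using hereditaryD[OF assms] by (meson insert_mono subsetD)

lemma faces_through_eq_image_link: "{F \<in> \<F>. x \<in> F} = insert x ` link \<F> x"
proof (intro equalityI subsetI)
  fix F assume "F \<in> {F \<in> \<F>. x \<in> F}"
  then have "F - {x} \<in> link \<F> x" and "F = insert x (F - {x})"
    by (auto simp: mem_link_iff insert_absorb)
  then show "F \<in> insert x ` link \<F> x" by blast
qed (auto simp: mem_link_iff)

lemma inj_on_insert_link: "inj_on (insert x) (link \<F> x)"
  by (rule inj_onI) (metis Diff_insert_absorb mem_link_iff)

lemma card_pairs_of_card_4:
  assumes "finite U" "card U = 4"
  shows "card {P. P \<subseteq> U \<and> card P = 2} = 6"
  using n_subsets[OF assms(1), of 2] assms(2) by (simp add: choose_two)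

lemma card_singletons_in_family: "card {S \<in> L. card S = 1} = card {y. {y} \<in> L}"
proof -
  have "{S \<in> L. card S = 1} = (\<lambda>y. {y}) ` {y. {y} \<in> L}"
    by (auto simp: card_1_singleton_iff)
  then show ?thesis by (simp add: card_image)
qed

lemma hereditary_subset_vertices:
  assumes "hereditary L" "S \<in> L"
  shows "S \<subseteq> {y. {y} \<in> L}"
  using hereditaryD[OF assms] by blast

lemma missing_pair_of_card_4:
  assumes "finite U" "card U = 4" "\<And>S. S \<in> L \<Longrightarrow> S \<subseteq> U"
    and "card {S \<in> L. card S = 2} = 5"
  obtains c d where "c \<in> U" "d \<in> U" "c \<noteq> d" "{c, d} \<notin> L"
proof -
  let ?P = "{P. P \<subseteq> U \<and> card P = 2}"
  have "\<not> ?P \<subseteq> {S \<in> L. card S = 2}"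
  proof
    assume "?P \<subseteq> {S \<in> L. card S = 2}"
    moreover have "finite {S \<in> L. card S = 2}"
      using assms(4) by (metis card.infinite zero_neq_numeral)
    ultimately have "card ?P \<le> card {S \<in> L. card S = 2}" by (intro card_mono)
    then show False using card_pairs_of_card_4[OF assms(1,2)] assms(4) by simp
  qed
  then obtain E where "E \<subseteq> U" "card E = 2" "E \<notin> L" using assms(3) by blast
  moreover from \<open>card E = 2\<close> obtain c d where "E = {c, d}" "c \<noteq> d"
    by (meson card_2_iff)
  ultimately show thesis using that by blast
qed

lemma hereditary_two_triangles:
  assumes her: "hereditary L"
    and f1: "card {S \<in> L. card S = 1} = 4"
    and f2: "card {S \<in> L. card S = 2} = 5"
    and f3: "card {S \<in> L. card S = 3} = 2"
  obtains A B where "card A = 3" "card B = 3" "card (A \<inter> B) = 2" "L = {S. S \<subseteq> A \<or> S \<subseteq> B}"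
proof -
  define U where "U = {y. {y} \<in> L}"
  have cU: "card U = 4" and finU: "finite U"
    using f1 card_singletons_in_family[of L] card.infinite unfolding U_def by fastforce+
  have LU: "S \<subseteq> U" if "S \<in> L" for S
    unfolding U_def using hereditary_subset_vertices[OF her that] .
  obtain c d where cd: "c \<in> U" "d \<in> U" "c \<noteq> d" "{c, d} \<notin> L"
    using missing_pair_of_card_4[OF finU cU LU f2] .
  define A where "A = U - {c}"
  define B where "B = U - {d}"
  have cA: "card A = 3" and cB: "card B = 3" and finA: "finite A" and finB: "finite B"
    using cU cd finU unfolding A_def B_def by auto
  have in_A_or_B: "S \<subseteq> A \<or> S \<subseteq> B" if "S \<in> L" for S
  proof -
    have "\<not> {c, d} \<subseteq> S" using hereditaryD[OF her that] cd(4) by blast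
    then show ?thesis using LU[OF that] unfolding A_def B_def by blast
  qed
  have triangles: "{S \<in> L. card S = 3} \<subseteq> {A, B}"
  proof
    fix T assume T: "T \<in> {S \<in> L. card S = 3}"
    then have "T \<subseteq> A \<or> T \<subseteq> B" using in_A_or_B by blast
    then show "T \<in> {A, B}"
      using T card_subset_eq[OF finA, of T] card_subset_eq[OF finB, of T] cA cB by auto
  qed
  have "A \<noteq> B" using cd unfolding A_def B_def by blast
  then have "{S \<in> L. card S = 3} = {A, B}"
    using card_subset_eq[OF _ triangles] f3 by simp
  then have "A \<in> L" "B \<in> L" by blast+
  then have L_eq: "L = {S. S \<subseteq> A \<or> S \<subseteq> B}"
    using in_A_or_B hereditaryD[OF her] by (intro set_eqI iffI) auto
  have "card (A \<inter> B) = 2"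
  proof -
    have "A \<inter> B = U - {c, d}" unfolding A_def B_def by blast
    moreover have "card (U - {c, d}) = 2"
      using cU cd finU by (subst card_Diff_subset) auto
    ultimately show ?thesis by simp
  qed
  then show thesis by (rule that[OF cA cB _ L_eq])
qed

lemma omega_eq_inverse_card:
  assumes "card F \<noteq> 3 \<or> (\<exists>G \<in> \<F>. card G = 4 \<and> F \<subseteq> G)"
  shows "omega \<F> x F = 1 / real (card F)"
  using assms unfolding omega_def by auto

lemma weight_eq_sum_link:
  assumes "\<And>F. F \<in> \<F> \<Longrightarrow> finite F"
    and "\<And>F. F \<in> \<F> \<Longrightarrow> x \<in> F \<Longrightarrow> card F = 3 \<Longrightarrow> \<exists>G \<in> \<F>. card G = 4 \<and> F \<subseteq> G"
  shows "weight \<F> x = (\<Sum>S \<in> link \<F> x. 1 / (real (card S) + 1))"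
proof -
  have "omega \<F> x (insert x S) = 1 / (real (card S) + 1)" if "S \<in> link \<F> x" for S
  proof -
    from that have "x \<notin> S" "insert x S \<in> \<F>" by (simp_all add: mem_link_iff)
    then have "card (insert x S) = card S + 1" using assms(1) by fastforce
    moreover have "omega \<F> x (insert x S) = 1 / real (card (insert x S))"
      using assms(2)[OF \<open>insert x S \<in> \<F>\<close>] by (intro omega_eq_inverse_card) auto
    ultimately show ?thesis by simp
  qed
  then show ?thesis
    unfolding weight_def faces_through_eq_image_link sum.reindex[OF inj_on_insert_link]
    by (simp add: comp_def)
qed

lemma sum_grouped_by_card:
  fixes f :: "nat \<Rightarrow> 'b :: semiring_1"
  assumes "finite L" "\<And>S. S \<in> L \<Longrightarrow> card S \<le> n"
  shows "(\<Sum>S \<in> L. f (card S)) = (\<Sum>k\<le>n. of_nat (card {S \<in> L. card S = k}) * f k)"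
proof -
  have "(\<Sum>S \<in> L. f (card S)) = (\<Sum>k\<le>n. \<Sum>S \<in> {S \<in> L. card S = k}. f (card S))"
    using sum.group[OF assms(1), of "{..n}" card "\<lambda>S. f (card S)"] assms(2) by fastforce
  also have "\<dots> = (\<Sum>k\<le>n. of_nat (card {S \<in> L. card S = k}) * f k)"
    by (intro sum.cong) auto
  finally show ?thesis .
qed

lemma Qx_eq_if_link_two_triangles:
  assumes "link \<F> x = {S. S \<subseteq> A \<or> S \<subseteq> B}" "card A = 3" "card B = 3"
  shows "Qx \<F> x = {insert x A, insert x B}"
proof -
  have "finite A" "finite B" using assms(2,3) card.infinite by fastforce+
  have "A \<in> link \<F> x" "B \<in> link \<F> x" using assms(1) by blast+
  then have xAB: "x \<notin> A" "x \<notin> B" and "insert x A \<in> \<F>" "insert x B \<in> \<F>"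
    by (simp_all add: mem_link_iff)
  have "Q - {x} = A \<or> Q - {x} = B" if "Q \<in> \<F>" "card Q = 4" "x \<in> Q" for Q
  proof -
    have "Q - {x} \<subseteq> A \<or> Q - {x} \<subseteq> B" "card (Q - {x}) = 3"
      using that assms(1) mem_link_iff[of "Q - {x}" \<F> x] by (auto simp: insert_absorb)
    then show ?thesis
      using card_subset_eq[OF \<open>finite A\<close>] card_subset_eq[OF \<open>finite B\<close>] assms(2,3) by metis
  qed
  then show ?thesis
    using \<open>insert x A \<in> \<F>\<close> \<open>insert x B \<in> \<F>\<close> xAB assms(2,3) \<open>finite A\<close> \<open>finite B\<close>
    unfolding Qx_def by (auto simp: insert_absorb)
qed

lemma subsets_either_eq_Diff_subsets_insert:
  assumes "x \<notin> A" "x \<notin> B"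
  shows "{S. S \<subseteq> A \<or> S \<subseteq> B} = {F - {x} | F. x \<in> F \<and> (F \<subseteq> insert x A \<or> F \<subseteq> insert x B)}"
proof (intro equalityI subsetI)
  fix S assume "S \<in> {S. S \<subseteq> A \<or> S \<subseteq> B}"
  then have "S = insert x S - {x}" "insert x S \<subseteq> insert x A \<or> insert x S \<subseteq> insert x B"
    using assms by auto
  then show "S \<in> {F - {x} | F. x \<in> F \<and> (F \<subseteq> insert x A \<or> F \<subseteq> insert x B)}" by blast
qed auto

lemma weight_if_link_two_triangles:
  assumes "\<And>F. F \<in> \<F> \<Longrightarrow> finite F"
    and link_eq: "link \<F> x = {S. S \<subseteq> A \<or> S \<subseteq> B}" and "card A = 3" "card B = 3"
  shows "weight \<F> x = 1 + fcount \<F> 1 x / 2 + fcount \<F> 2 x / 3 + fcount \<F> 3 x / 4"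
proof -
  let ?n = "\<lambda>k. card {S \<in> link \<F> x. card S = k}"
  have finA: "finite A" and finB: "finite B" using assms(3,4) card.infinite by fastforce+
  have "{S \<in> link \<F> x. card S = 0} = {{}}"
    using link_eq finA finB by (auto dest: rev_finite_subset)
  then have n0: "?n 0 = 1" by simp
  have "\<exists>Q \<in> \<F>. card Q = 4 \<and> G \<subseteq> Q" if "G \<in> \<F>" "x \<in> G" for G
  proof -
    have "G - {x} \<subseteq> A \<or> G - {x} \<subseteq> B"
      using that link_eq mem_link_iff[of "G - {x}" \<F> x] by (auto simp: insert_absorb)
    then show ?thesis
      using Qx_eq_if_link_two_triangles[OF link_eq assms(3,4)] unfolding Qx_def by blast
  qed
  then have "weight \<F> x = (\<Sum>S \<in> link \<F> x. 1 / (real (card S) + 1))"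
    using assms(1) by (intro weight_eq_sum_link) auto
  also have "\<dots> = (\<Sum>k\<le>3. real (?n k) * (1 / (real k + 1)))"
  proof (rule sum_grouped_by_card)
    show "finite (link \<F> x)" using link_eq finA finB by simp
    show "card S \<le> 3" if "S \<in> link \<F> x" for S
      using that link_eq card_mono[OF finA] card_mono[OF finB] assms(3,4) by force
  qed
  also have "\<dots> = 1 + fcount \<F> 1 x / 2 + fcount \<F> 2 x / 3 + fcount \<F> 3 x / 4"
    using n0 unfolding fcount_def by (simp add: numeral_eq_Suc)
  finally show ?thesis .
qed

lemma two_quads_if_link_two_triangles:
  assumes link_eq: "link \<F> x = {S. S \<subseteq> A \<or> S \<subseteq> B}"
    and cA: "card A = 3" and cB: "card B = 3" and cAB: "card (A \<inter> B) = 2"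
  shows "card (Qx \<F> x) = 2 \<and>
    (\<forall>Q1 Q2. Qx \<F> x = {Q1, Q2} \<and> Q1 \<noteq> Q2 \<longrightarrow>
      card (Q1 \<inter> Q2) = 3 \<and> link \<F> x = {F - {x} | F. x \<in> F \<and> (F \<subseteq> Q1 \<or> F \<subseteq> Q2)})"
proof -
  have "A \<in> link \<F> x" "B \<in> link \<F> x" using link_eq by blast+
  then have xA: "x \<notin> A" and xB: "x \<notin> B" by (simp_all add: mem_link_iff)
  have Q_eq: "Qx \<F> x = {insert x A, insert x B}"
    using Qx_eq_if_link_two_triangles[OF link_eq cA cB] .
  have finA: "finite A" using cA by (metis card.infinite zero_neq_numeral)
  have "insert x A \<inter> insert x B = insert x (A \<inter> B)" by blast
  then have card_inter: "card (insert x A \<inter> insert x B) = 3"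
    using cAB xA finA by simp
  moreover have "card (insert x A) = 4" using cA xA finA by simp
  ultimately have "insert x A \<noteq> insert x B" by force
  then have "card (Qx \<F> x) = 2" using Q_eq by simp
  moreover have "\<forall>Q1 Q2. Qx \<F> x = {Q1, Q2} \<and> Q1 \<noteq> Q2 \<longrightarrow>
      card (Q1 \<inter> Q2) = 3 \<and> link \<F> x = {F - {x} | F. x \<in> F \<and> (F \<subseteq> Q1 \<or> F \<subseteq> Q2)}"
  proof (intro allI impI)
    fix Q1 Q2 assume "Qx \<F> x = {Q1, Q2} \<and> Q1 \<noteq> Q2"
    then have "Q1 = insert x A \<and> Q2 = insert x B \<or> Q1 = insert x B \<and> Q2 = insert x A"
      using doubleton_eq_iff[of Q1 Q2 "insert x A" "insert x B"] Q_eq by argo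
    moreover have "link \<F> x = {F - {x} | F. x \<in> F \<and> (F \<subseteq> insert x A \<or> F \<subseteq> insert x B)}"
      using link_eq subsets_either_eq_Diff_subsets_insert[OF xA xB] by simp
    ultimately show "card (Q1 \<inter> Q2) = 3 \<and>
        link \<F> x = {F - {x} | F. x \<in> F \<and> (F \<subseteq> Q1 \<or> F \<subseteq> Q2)}"
      using card_inter by (elim disjE) (simp_all add: Int_commute disj_commute)
  qed
  ultimately show ?thesis ..
qed

theorem mainTheorem6:
  fixes V :: "'a set" and \<F> :: "'a set set" and x :: 'a
  assumes "finite V"
    and "\<F> \<subseteq> Pow V"
    and "minimal_family V \<F>"
    and "x \<in> V"
    and "mini_weight \<F> x"
  shows "card (Qx \<F> x) = 2 \<and>
         (\<forall>Q1 Q2. Qx \<F> x = {Q1, Q2} \<and> Q1 \<noteq> Q2 \<longrightarrow>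
            card (Q1 \<inter> Q2) = 3 \<and>
            link \<F> x = {F - {x} | F. x \<in> F \<and> (F \<subseteq> Q1 \<or> F \<subseteq> Q2)}) \<and>
         weight \<F> x = 53/10 - 2/15"
proof -
  have her: "hereditary \<F>" using assms(3) unfolding minimal_family_def by blast
  have fin: "finite F" if "F \<in> \<F>" for F
    using that assms(1,2) finite_subset by blast
  obtain A B where cA: "card A = 3" and cB: "card B = 3" and cAB: "card (A \<inter> B) = 2"
    and link_eq: "link \<F> x = {S. S \<subseteq> A \<or> S \<subseteq> B}"
    using hereditary_two_triangles[OF hereditary_link[OF her]] assms(5)
    unfolding mini_weight_def fcount_def by blast
  have "weight \<F> x = 53/10 - 2/15"
    using weight_if_link_two_triangles[OF fin link_eq cA cB] assms(5)
    unfolding mini_weight_def by simp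
  with two_quads_if_link_two_triangles[OF link_eq cA cB cAB] show ?thesis
    by (elim conjE) (intro conjI)
qed

end
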